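(* Let $(X,d)$ be a complete separable metric space and let $f\colon X\to X$ be a continuous map. If $f$ is strongly mixing, then every uniformly Li-Yorke scrambled set of $f$ is of first category in $X$.
   Context: $f$ is strongly mixing if for all nonempty open $U,V\subset X$ there is $N\in\mathbb{N}$ such that $U\cap f^{-n}(V)\neq\emptyset$ for all $n\geq N$. A subset $S\subset X$ with at least two points is uniformly Li-Yorke scrambled for $f$ if there exist sequences $\{p_n\}$, $\{q_n\}$ in $\mathbb{N}$ such that for all distinct $x,y\in S$: $\lim_{n} d(f^{p_n}(x),f^{p_n}(y))=0$ and $\lim_{n} d(f^{q_n}(x),f^{q_n}(y))=\infty$. A set is of first category if its complement contains a dense $G_\delta$ subset. *)

theory Defs
  imports "HOL-Analysis.Analysis"
begin

definition strongly_mixing :: "('a::topological_space \<Rightarrow> 'a) \<Rightarrow> bool" where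
  "strongly_mixing f \<longleftrightarrow>
     (\<forall>U V. open U \<and> U \<noteq> {} \<and> open V \<and> V \<noteq> {} \<longrightarrow>
        (\<exists>N. \<forall>n\<ge>N. U \<inter> (f ^^ n) -` V \<noteq> {}))"

definition uniformly_li_yorke_scrambled :: "('a::metric_space \<Rightarrow> 'a) \<Rightarrow> 'a set \<Rightarrow> bool" where
  "uniformly_li_yorke_scrambled f S \<longleftrightarrow>
     (\<exists>x\<in>S. \<exists>y\<in>S. x \<noteq> y) \<and>
     (\<exists>p q :: nat \<Rightarrow> nat.
        \<forall>x\<in>S. \<forall>y\<in>S. x \<noteq> y \<longrightarrow>
          ((\<lambda>n. dist ((f ^^ p n) x) ((f ^^ p n) y)) \<longlonglongrightarrow> 0) \<and>
          filterlim (\<lambda>n. dist ((f ^^ q n) x) ((f ^^ q n) y)) at_top sequentially)"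

definition first_category :: "'a::topological_space set \<Rightarrow> bool" where
  "first_category S \<longleftrightarrow>
     (\<exists>G. gdelta_in euclidean G \<and> closure G = UNIV \<and> G \<subseteq> - S)"

end

theory Submission
  imports Defs
begin

(*
  Fix distinct x0, x1 in the scrambled set S and let r = d(x0,x1)/4. The points whose
  p-orbit is r-far from that of x0 for infinitely many n form a countable intersection
  of open sets, each dense by strong mixing: since x0 and x1 have disjoint orbits but
  are proximal along p, the times p n tend to infinity, and for large m every open U
  contains points mapped by f^m near x0 and near x1, one of which is then r-far from
  any given point. By Baire this intersection is a dense G_delta, and it misses S
  because every point of S is proximal to x0 along p.
*)

lemma continuous_on_funpow:
  fixes f :: "'a::topological_space \<Rightarrow> 'a"
  assumes "continuous_on UNIV f"
  shows "continuous_on UNIV (f ^^ k)"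
proof (induction k)
  case (Suc k)
  then show ?case
    using continuous_on_compose2[OF assms Suc] by simp
qed (simp add: continuous_on_id)

lemma funpow_eq_after:
  fixes f :: "'a \<Rightarrow> 'a"
  assumes "(f ^^ k) x = (f ^^ k) y" and "k \<le> m"
  shows "(f ^^ m) x = (f ^^ m) y"
proof -
  have "f ^^ m = f ^^ (m - k) \<circ> f ^^ k"
    using assms(2) by (simp flip: funpow_add)
  then show ?thesis
    using assms(1) by simp
qed

lemma orbits_never_meet_if_dist_unbounded:
  fixes f :: "'a::metric_space \<Rightarrow> 'a"
  assumes "filterlim (\<lambda>n. dist ((f ^^ q n) x) ((f ^^ q n) y)) at_top sequentially"
  shows "(f ^^ k) x \<noteq> (f ^^ k) y"
proof
  assume meet: "(f ^^ k) x = (f ^^ k) y"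
  define B where "B = (\<Sum>j<k. dist ((f ^^ j) x) ((f ^^ j) y))"
  have bounded: "dist ((f ^^ m) x) ((f ^^ m) y) \<le> B" for m
  proof (cases "m < k")
    case True
    then show ?thesis
      unfolding B_def by (intro member_le_sum) auto
  next
    case False
    then show ?thesis
      using funpow_eq_after[OF meet, of m] unfolding B_def by (simp add: sum_nonneg)
  qed
  have "\<forall>\<^sub>F n in sequentially. B < dist ((f ^^ q n) x) ((f ^^ q n) y)"
    using assms by (simp add: filterlim_at_top_dense)
  then obtain n where "B < dist ((f ^^ q n) x) ((f ^^ q n) y)"
    using eventually_happens'[OF sequentially_bot] by blast
  with bounded show False
    by (meson not_le)
qed

lemma tendsto_0_comp_imp_filterlim_at_top:
  fixes g :: "nat \<Rightarrow> real" and p :: "'b \<Rightarrow> nat"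
  assumes pos: "\<And>k. 0 < g k" and lim: "((\<lambda>n. g (p n)) \<longlongrightarrow> 0) F"
  shows "filterlim p at_top F"
  unfolding filterlim_at_top
proof
  fix M
  have "\<forall>\<^sub>F n in F. p n \<noteq> k" for k
    using order_tendstoD(2)[OF lim pos[of k]] by (rule eventually_mono) auto
  then have "\<forall>k\<in>{..<M}. \<forall>\<^sub>F n in F. p n \<noteq> k"
    by blast
  then have "\<forall>\<^sub>F n in F. \<forall>k\<in>{..<M}. p n \<noteq> k"
    by (simp add: eventually_ball_finite)
  then show "\<forall>\<^sub>F n in F. M \<le> p n"
    by (rule eventually_mono) (use not_le in auto)
qed

lemma strongly_mixingD:
  assumes "strongly_mixing f" "open U" "U \<noteq> {}" "open V" "V \<noteq> {}"
  shows "\<forall>\<^sub>F n in sequentially. U \<inter> (f ^^ n) -` V \<noteq> {}"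
  using assms unfolding strongly_mixing_def eventually_sequentially by blast

lemma strongly_mixing_eventually_far:
  fixes f :: "'a::metric_space \<Rightarrow> 'a" and a b :: 'a
  assumes "strongly_mixing f" "open U" "U \<noteq> {}" "a \<noteq> b"
  shows "\<forall>\<^sub>F m in sequentially. \<forall>z. \<exists>u\<in>U. dist a b / 4 < dist ((f ^^ m) u) z"
proof -
  define r where "r = dist a b / 4"
  have "r > 0"
    using assms(4) by (simp add: r_def)
  then have "\<forall>\<^sub>F m in sequentially.
      U \<inter> (f ^^ m) -` ball a r \<noteq> {} \<and> U \<inter> (f ^^ m) -` ball b r \<noteq> {}"
    using assms by (intro eventually_conj strongly_mixingD) auto
  then show ?thesis
  proof (rule eventually_mono, intro allI)
    fix m z
    assume "U \<inter> (f ^^ m) -` ball a r \<noteq> {} \<and> U \<inter> (f ^^ m) -` ball b r \<noteq> {}"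
    then obtain u v where u: "u \<in> U" "dist a ((f ^^ m) u) < r"
      and v: "v \<in> U" "dist b ((f ^^ m) v) < r"
      by auto
    have "4 * r \<le> dist a ((f ^^ m) u) + dist ((f ^^ m) u) z + dist z ((f ^^ m) v)
        + dist ((f ^^ m) v) b"
      using dist_triangle[of a b "(f ^^ m) u"] dist_triangle[of "(f ^^ m) u" b z]
        dist_triangle[of z b "(f ^^ m) v"]
      unfolding r_def by linarith
    then have "r < dist ((f ^^ m) u) z \<or> r < dist ((f ^^ m) v) z"
      using u(2) v(2) dist_commute[of b "(f ^^ m) v"] dist_commute[of z "(f ^^ m) v"]
      by linarith
    then show "\<exists>w\<in>U. dist a b / 4 < dist ((f ^^ m) w) z"
      using u(1) v(1) unfolding r_def by blast
  qed
qed

definition far_along :: "('a::metric_space \<Rightarrow> 'a) \<Rightarrow> (nat \<Rightarrow> nat) \<Rightarrow> 'a \<Rightarrow> real \<Rightarrow> nat \<Rightarrow> 'a set"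
  where "far_along f p c r N = (\<Union>n\<in>{N..}. {y. r < dist ((f ^^ p n) y) ((f ^^ p n) c)})"

lemma open_far_along:
  assumes "continuous_on UNIV f"
  shows "open (far_along f p c r N)"
  unfolding far_along_def
  using continuous_on_funpow[OF assms]
  by (intro open_UN ballI open_Collect_less continuous_intros) auto

lemma dense_far_along:
  fixes f :: "'a::metric_space \<Rightarrow> 'a" and a b c :: 'a
  assumes "strongly_mixing f" "filterlim p at_top sequentially" "a \<noteq> b"
  shows "closure (far_along f p c (dist a b / 4) N) = UNIV"
  unfolding euclidean_closure_of[symmetric] topspace_euclidean[symmetric] dense_intersects_open
proof (intro allI impI)
  fix U :: "'a set"
  assume "openin euclidean U \<and> U \<noteq> {}"
  then have "\<forall>\<^sub>F m in sequentially. \<forall>z. \<exists>u\<in>U. dist a b / 4 < dist ((f ^^ m) u) z"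
    using strongly_mixing_eventually_far[OF assms(1) _ _ assms(3)] by auto
  then have "\<forall>\<^sub>F n in sequentially. \<forall>z. \<exists>u\<in>U. dist a b / 4 < dist ((f ^^ p n) u) z"
    using assms(2) by (rule eventually_compose_filterlim)
  then have "\<forall>\<^sub>F n in sequentially. N \<le> n \<and>
      (\<forall>z. \<exists>u\<in>U. dist a b / 4 < dist ((f ^^ p n) u) z)"
    by (intro eventually_conj eventually_ge_at_top)
  then obtain n where "N \<le> n" "\<exists>u\<in>U. dist a b / 4 < dist ((f ^^ p n) u) ((f ^^ p n) c)"
    using eventually_happens'[OF sequentially_bot] by blast
  then show "far_along f p c (dist a b / 4) N \<inter> U \<noteq> {}"
    unfolding far_along_def by blast
qed

lemma proximal_notin_Inter_far_along:
  fixes f :: "'a::metric_space \<Rightarrow> 'a"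
  assumes "((\<lambda>n. dist ((f ^^ p n) y) ((f ^^ p n) c)) \<longlonglongrightarrow> 0)" "r > 0"
  shows "y \<notin> (\<Inter>N. far_along f p c r N)"
proof -
  obtain N where "\<And>n. N \<le> n \<Longrightarrow> dist ((f ^^ p n) y) ((f ^^ p n) c) < r"
    using order_tendstoD(2)[OF assms] unfolding eventually_sequentially by blast
  then have "y \<notin> far_along f p c r N"
    unfolding far_along_def by force
  then show ?thesis
    by blast
qed

lemma first_category_if_disjoint_Inter_dense_open:
  fixes D :: "nat \<Rightarrow> 'a::polish_space set"
  assumes "\<And>N. open (D N)" "\<And>N. closure (D N) = UNIV" "S \<inter> (\<Inter>N. D N) = {}"
  shows "first_category S"
  unfolding first_category_def
proof (intro exI conjI)
  show "gdelta_in euclidean (\<Inter>N. D N)"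
    using assms(1) by (intro gdelta_in_Inter open_imp_gdelta_in) auto
  have "euclidean closure_of (\<Inter>(range D)) = topspace euclidean"
    using assms(1,2)
    by (intro Baire_category) (auto simp: completely_metrizable_space_euclidean euclidean_closure_of)
  then show "closure (\<Inter>N. D N) = UNIV"
    by (simp add: euclidean_closure_of)
  show "(\<Inter>N. D N) \<subseteq> - S"
    using assms(3) by blast
qed

theorem proposition2p8:
  fixes f :: "'a::polish_space \<Rightarrow> 'a" and S :: "'a set"
  assumes "continuous_on UNIV f"
    and "strongly_mixing f"
    and "uniformly_li_yorke_scrambled f S"
  shows "first_category S"
proof -
  obtain x0 x1 p q where x0: "x0 \<in> S" and x1: "x1 \<in> S" and "x0 \<noteq> x1"
    and pq: "\<And>x y. x \<in> S \<Longrightarrow> y \<in> S \<Longrightarrow> x \<noteq> y \<Longrightarrow>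
      ((\<lambda>n. dist ((f ^^ p n) x) ((f ^^ p n) y)) \<longlonglongrightarrow> 0) \<and>
      filterlim (\<lambda>n. dist ((f ^^ q n) x) ((f ^^ q n) y)) at_top sequentially"
    using assms(3) unfolding uniformly_li_yorke_scrambled_def by blast
  have "filterlim p at_top sequentially"
    using pq[OF x0 x1 \<open>x0 \<noteq> x1\<close>] orbits_never_meet_if_dist_unbounded[of q f x0 x1]
    by (intro tendsto_0_comp_imp_filterlim_at_top[where g = "\<lambda>k. dist ((f ^^ k) x0) ((f ^^ k) x1)"])
      auto
  moreover have "y \<notin> (\<Inter>N. far_along f p x0 (dist x0 x1 / 4) N)" if "y \<in> S" for y
  proof (rule proximal_notin_Inter_far_along)
    show "(\<lambda>n. dist ((f ^^ p n) y) ((f ^^ p n) x0)) \<longlonglongrightarrow> 0"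
      using pq[OF that x0] by (cases "y = x0") auto
  qed (use \<open>x0 \<noteq> x1\<close> in simp)
  ultimately show ?thesis
    using assms(1,2) \<open>x0 \<noteq> x1\<close>
    by (intro first_category_if_disjoint_Inter_dense_open[where D = "far_along f p x0 (dist x0 x1 / 4)"]
        open_far_along dense_far_along) auto
qed

end
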